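(* Let $\Bbbk$ be a field and let $I\subseteq \Bbbk[x,y,z]$ be a monomial ideal generated in degree $d$ having a linear resolution, with minimal monomial generators $m_1,\ldots,m_r$ listed in tree ordering. For $2\le j\le r$ let $I_j=(m_1,\ldots,m_j)$. If $u,v\in\mathcal G(I_j)$ are on the same level (i.e. $\deg_z u=\deg_z v$), then the graph $G_{I_j}(u,v)$ is connected.
   Context: $\mathcal G(J)$ is the minimal monomial generating set of a monomial ideal $J$. The dual graph $G_J$ has vertex set $\mathcal G(J)$, with $\{f,g\}$ an edge iff $\deg\operatorname{lcm}(f,g)=\deg f+1=\deg g+1$; $G_J(f,g)$ is the induced subgraph of $G_J$ on the generators of $J$ dividing $\operatorname{lcm}(f,g)$. A monomial is on the $c$-th level if its $z$-degree is $c$. Tree ordering (for $I$ generated in degree $d$ and linearly presented, so its generators occupy consecutive levels $c,c+1,\ldots,c+p-1$): the generators are ordered level by level in increasing $z$-degree. On level $c$, generators are ordered by strictly decreasing $x$-degree. For $0<i<p$, on level $c+i$, let $m_{i,1}$ be the generator on level $c+i$ of highest $x$-degree that is joined by an edge of $G_I$ to some generator on level $c+i-1$; put $m_{i,1}$ first, then the generators on level $c+i$ with $x$-degree smaller than that of $m_{i,1}$ in decreasing order of $x$-degree, then the remaining generators on level $c+i$ in increasing order of $x$-degree. *)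

theory Defs
  imports Complex_Main "HOL-Library.Function_Algebras"
begin

(* A monomial x^a y^b z^c of k[x,y,z] is represented by its exponent triple (a,b,c). *)
type_synonym mono = "nat \<times> nat \<times> nat"

definition xd :: "mono \<Rightarrow> nat" where "xd m = fst m"
definition yd :: "mono \<Rightarrow> nat" where "yd m = fst (snd m)"
definition zd :: "mono \<Rightarrow> nat" where "zd m = snd (snd m)"

definition mdeg :: "mono \<Rightarrow> nat" where "mdeg m = xd m + yd m + zd m"

definition mdvd :: "mono \<Rightarrow> mono \<Rightarrow> bool" where
  "mdvd u v \<longleftrightarrow> xd u \<le> xd v \<and> yd u \<le> yd v \<and> zd u \<le> zd v"

definition mlcm :: "mono \<Rightarrow> mono \<Rightarrow> mono" where
  "mlcm u v = (max (xd u) (xd v), max (yd u) (yd v), max (zd u) (zd v))"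

(* exponent of variable i (0 = x, 1 = y, 2 = z) *)
definition expo :: "mono \<Rightarrow> nat \<Rightarrow> nat" where
  "expo m i = (if i = 0 then xd m else if i = 1 then yd m else zd m)"

definition in_ideal :: "mono set \<Rightarrow> mono \<Rightarrow> bool" where
  "in_ideal S m \<longleftrightarrow> (\<exists>g\<in>S. mdvd g m)"

definition mingens :: "mono set \<Rightarrow> mono set" where
  "mingens S = {m \<in> S. \<forall>m'\<in>S. mdvd m' m \<longrightarrow> m' = m}"

definition face_shift :: "mono \<Rightarrow> nat set \<Rightarrow> mono" where
  "face_shift b F = (xd b - (if 0 \<in> F then 1 else 0),
                     yd b - (if 1 \<in> F then 1 else 0),
                     zd b - (if 2 \<in> F then 1 else 0))"

(* upper Koszul simplicial complex K^b(I) = {F \<subseteq> {x,y,z} : x^(b-F) \<in> I} *)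
definition koszul_cx :: "mono set \<Rightarrow> mono \<Rightarrow> nat set set" where
  "koszul_cx S b = {F. F \<subseteq> {0,1,2} \<and> (\<forall>i\<in>F. 1 \<le> expo b i) \<and> in_ideal S (face_shift b F)}"

(* augmented simplicial chains over k supported on faces of cardinality q *)
definition chains :: "mono set \<Rightarrow> mono \<Rightarrow> nat \<Rightarrow> (nat set \<Rightarrow> 'k::field) set" where
  "chains S b q = {c. \<forall>F. c F \<noteq> 0 \<longrightarrow> F \<in> koszul_cx S b \<and> card F = q}"

definition bd :: "(nat set \<Rightarrow> 'k::field) \<Rightarrow> (nat set \<Rightarrow> 'k)" where
  "bd c = (\<lambda>G. \<Sum>j\<in>{0,1,2} - G. (-1) ^ card {l\<in>G. l < j} * c (insert j G))"

definition kscale :: "'k::field \<Rightarrow> (nat set \<Rightarrow> 'k) \<Rightarrow> (nat set \<Rightarrow> 'k)" where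
  "kscale a f = (\<lambda>x. a * f x)"

(* beta_{i,b}(I) = dim_k H~_{i-1}(K^b(I); k)  (Miller--Sturmfels, Thm. 1.34);
   homology at the chains on faces of cardinality i *)
definition betti :: "'k::field itself \<Rightarrow> mono set \<Rightarrow> nat \<Rightarrow> mono \<Rightarrow> nat" where
  "betti K S i b =
     vector_space.dim (kscale :: 'k \<Rightarrow> _) {c \<in> (chains S b i :: (nat set \<Rightarrow> 'k) set). bd c = 0}
     - vector_space.dim (kscale :: 'k \<Rightarrow> _) (bd ` (chains S b (Suc i) :: (nat set \<Rightarrow> 'k) set))"

definition linear_resolution :: "'k::field itself \<Rightarrow> nat \<Rightarrow> mono set \<Rightarrow> bool" where
  "linear_resolution K d S \<longleftrightarrow> (\<forall>i b. betti K S i b \<noteq> 0 \<longrightarrow> mdeg b = d + i)"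

definition dual_edge :: "mono \<Rightarrow> mono \<Rightarrow> bool" where
  "dual_edge f g \<longleftrightarrow> mdeg (mlcm f g) = mdeg f + 1 \<and> mdeg (mlcm f g) = mdeg g + 1"

definition GJ_verts :: "mono set \<Rightarrow> mono \<Rightarrow> mono \<Rightarrow> mono set" where
  "GJ_verts S f g = {h \<in> mingens S. mdvd h (mlcm f g)}"

definition GJ_connected :: "mono set \<Rightarrow> mono \<Rightarrow> mono \<Rightarrow> bool" where
  "GJ_connected S f g \<longleftrightarrow>
     (let V = GJ_verts S f g in
      \<forall>a\<in>V. \<forall>b\<in>V. (a, b) \<in> {(p, q). p \<in> V \<and> q \<in> V \<and> dual_edge p q}\<^sup>*)"

definition tree_ordering :: "mono list \<Rightarrow> bool" where
  "tree_ordering ms \<longleftrightarrow>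
    (let G = mingens (set ms); c = Min (zd ` G) in
     distinct ms \<and> set ms = G \<and>
     sorted_wrt (\<lambda>a b. zd a \<le> zd b) ms \<and>
     sorted_wrt (\<lambda>a b. xd a > xd b) (filter (\<lambda>m. zd m = c) ms) \<and>
     (\<forall>l. c < l \<and> (\<exists>g\<in>G. zd g = l) \<longrightarrow>
        (\<exists>m1 L1 L2.
           m1 \<in> G \<and> zd m1 = l \<and> (\<exists>g\<in>G. zd g = l - 1 \<and> dual_edge m1 g) \<and>
           (\<forall>m\<in>G. zd m = l \<and> (\<exists>g\<in>G. zd g = l - 1 \<and> dual_edge m g) \<longrightarrow> xd m \<le> xd m1) \<and>
           filter (\<lambda>m. zd m = l) ms = m1 # L1 @ L2 \<and>
           set L1 = {m \<in> G. zd m = l \<and> xd m < xd m1} \<and>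
           sorted_wrt (\<lambda>a b. xd a > xd b) L1 \<and>
           set L2 = {m \<in> G. zd m = l \<and> xd m > xd m1} \<and>
           sorted_wrt (\<lambda>a b. xd a < xd b) L2)))"

end

theory Submission
  imports Defs
begin

text \<open>A linear resolution forces \<open>\<beta>\<^sub>1\<^sub>,\<^sub>b(I) = 0\<close>, i.e. a connected upper Koszul complex
  \<open>K\<^sup>b(I)\<close>, for every \<open>b\<close> of degree \<open>\<noteq> d + 1\<close>. Two generators dividing \<open>b\<close> divide monomials
  \<open>b/x\<^sub>s\<close>, \<open>b/x\<^sub>t\<close> for vertices \<open>s\<close>, \<open>t\<close> of \<open>K\<^sup>b(I)\<close>, and along an edge \<open>{s, t}\<close> some generator divides both;
  so induction on \<open>deg b\<close> shows that the generators dividing \<open>b\<close> span a connected subgraph of the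
  dual graph, in particular that every \<open>G\<^sub>I(f, g)\<close> is connected.

  For \<open>u\<close>, \<open>v\<close> on one level of \<open>I\<^sub>j\<close>, a generator of \<open>I\<close> outside \<open>I\<^sub>j\<close> dividing \<open>lcm(u, v)\<close> would
  lie on the same level with \<open>x\<close>-degree strictly between those of \<open>u\<close> and \<open>v\<close>. But the tree ordering
  lists a level as \<open>m\<^sub>1\<close>, then the generators moving away from it towards smaller \<open>x\<close>-degree, then
  those moving away from it towards larger \<open>x\<close>-degree; so such a generator comes before \<open>u\<close> or \<open>v\<close>.
  Hence \<open>G(u, v)\<close> is the same graph for \<open>I\<^sub>j\<close> as for \<open>I\<close>.\<close>

lemma xd_simp [simp]: "xd (a, b, c) = a"
  and yd_simp [simp]: "yd (a, b, c) = b"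
  and zd_simp [simp]: "zd (a, b, c) = c"
  by (simp_all add: xd_def yd_def zd_def)

lemma mono_eqI: "xd a = xd b \<Longrightarrow> yd a = yd b \<Longrightarrow> zd a = zd b \<Longrightarrow> a = b"
  by (auto simp: xd_def yd_def zd_def prod_eq_iff)

lemma mdvd_trans: "mdvd a b \<Longrightarrow> mdvd b c \<Longrightarrow> mdvd a c"
  by (auto simp: mdvd_def)

lemma mdvd_mdeg_le: "mdvd a b \<Longrightarrow> mdeg a \<le> mdeg b"
  by (auto simp: mdvd_def mdeg_def)

lemma mdvd_mdeg_eq_imp_eq: "mdvd a b \<Longrightarrow> mdeg a = mdeg b \<Longrightarrow> a = b"
  by (rule mono_eqI) (auto simp: mdvd_def mdeg_def)

lemma mdvd_mlcm1: "mdvd f (mlcm f g)"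
  and mdvd_mlcm2: "mdvd g (mlcm f g)"
  by (auto simp: mdvd_def mlcm_def)

lemma mlcm_least: "mdvd f c \<Longrightarrow> mdvd g c \<Longrightarrow> mdvd (mlcm f g) c"
  by (auto simp: mdvd_def mlcm_def)

lemma mingens_equal_degree:
  assumes "\<forall>m\<in>S. mdeg m = d"
  shows "mingens S = S"
  using assms mdvd_mdeg_eq_imp_eq unfolding mingens_def by auto

section \<open>The upper Koszul simplicial complex\<close>

lemma face_shift_empty [simp]: "face_shift b {} = b"
  by (simp add: face_shift_def xd_def yd_def zd_def)

lemma mdvd_face_shift_antimono: "G \<subseteq> F \<Longrightarrow> mdvd (face_shift b F) (face_shift b G)"
  by (auto simp: mdvd_def face_shift_def)

lemma koszul_cx_subset: "F \<in> koszul_cx S b \<Longrightarrow> G \<subseteq> F \<Longrightarrow> G \<in> koszul_cx S b"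
  unfolding koszul_cx_def in_ideal_def using mdvd_face_shift_antimono mdvd_trans by blast

lemma koszul_cx_common_divisor:
  assumes "{s, t} \<in> koszul_cx S b"
  obtains h where "h \<in> S" "mdvd h (face_shift b {s})" "mdvd h (face_shift b {t})"
proof -
  obtain h where "h \<in> S" "mdvd h (face_shift b {s, t})"
    using assms unfolding koszul_cx_def in_ideal_def by auto
  then show ?thesis
    using that mdvd_trans mdvd_face_shift_antimono[of "{s}" "{s, t}"]
      mdvd_face_shift_antimono[of "{t}" "{s, t}"] by blast
qed

lemma mdeg_face_shift_vertex:
  "{t} \<in> koszul_cx S b \<Longrightarrow> mdeg (face_shift b {t}) < mdeg b"
  by (auto simp: koszul_cx_def expo_def face_shift_def mdeg_def split: if_splits)

lemma koszul_cx_vertex_above: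
  assumes "f \<in> S" "mdvd f b" "f \<noteq> b"
  obtains t where "{t} \<in> koszul_cx S b" "mdvd f (face_shift b {t})"
proof -
  have "xd f < xd b \<or> yd f < yd b \<or> zd f < zd b"
    using assms(2,3) mono_eqI unfolding mdvd_def by fastforce
  then have "\<exists>t\<in>{0, 1, 2}. expo f t < expo b t"
    by (auto simp: expo_def)
  then obtain t where t: "t \<in> {0, 1, 2}" "expo f t < expo b t" ..
  then have "mdvd f (face_shift b {t})"
    using assms(2) by (auto simp: mdvd_def face_shift_def expo_def)
  with t assms(1) show ?thesis
    by (intro that) (auto simp: koszul_cx_def in_ideal_def)
qed

section \<open>Vanishing of \<open>\<beta>\<^sub>1\<close> and connectivity of the Koszul complex\<close>

lemma (in vector_space) subset_span_if_dim_le: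
  assumes "B \<subseteq> Z" "Z \<subseteq> span A" "finite A" "dim Z \<le> dim B"
  shows "Z \<subseteq> span B"
proof
  fix z assume "z \<in> Z"
  obtain B0 where B0: "B0 \<subseteq> B" "independent B0" "B \<subseteq> span B0" "card B0 = dim B"
    by (rule basis_exists)
  obtain C where C: "C \<subseteq> Z" "independent C" "Z \<subseteq> span C" "card C = dim Z"
    by (rule basis_exists)
  have "C \<subseteq> span A"
    using C(1) assms(2) by (rule order_trans)
  then have "finite C"
    using independent_span_bound[OF assms(3) C(2)] by simp
  show "z \<in> span B"
  proof (rule ccontr)
    assume "z \<notin> span B"
    then have z: "z \<notin> span B0" "z \<notin> B0"
      using span_mono[OF B0(1)] B0(1) span_superset[of B] by blast+
    have "independent (insert z B0)"
      using independent_insertI[OF z(1) B0(2)] .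
    moreover have "insert z B0 \<subseteq> span C"
      using \<open>z \<in> Z\<close> B0(1) assms(1) C(3) by blast
    ultimately have "finite (insert z B0) \<and> card (insert z B0) \<le> card C"
      by (rule independent_span_bound[OF \<open>finite C\<close>])
    then have "Suc (card B0) \<le> card C"
      using z(2) by (metis card_insert_disjoint finite_insert)
    then show False
      using B0(4) C(4) assms(4) by linarith
  qed
qed

interpretation chain_space: vector_space "kscale :: 'k::field \<Rightarrow> (nat set \<Rightarrow> 'k) \<Rightarrow> nat set \<Rightarrow> 'k"
  by unfold_locales (simp_all add: kscale_def fun_eq_iff algebra_simps)

lemma bd_empty: "bd c {} = c {0} + c {1} + c {2}"
  by (simp add: bd_def)

lemma
  shows bd_vertex0: "bd c {0} = - c {0, 1} - c {0, 2}"
    and bd_vertex1: "bd c {1} = c {0, 1} - c {1, 2}"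
    and bd_vertex2: "bd c {2} = c {0, 2} + c {1, 2}"
  by (simp_all add: bd_def insert_Diff_if insert_commute Collect_conv_if)

lemma bd_chains:
  assumes "e \<in> chains S b (Suc q)"
  shows "bd e \<in> chains S b q"
  unfolding chains_def
proof (intro CollectI allI impI)
  fix G assume "bd e G \<noteq> 0"
  then obtain j where j: "j \<in> {0, 1, 2} - G"
    and "(- 1) ^ card {l \<in> G. l < j} * e (insert j G) \<noteq> 0"
    unfolding bd_def by (rule sum.not_neutral_contains_not_neutral)
  then have nz: "e (insert j G) \<noteq> 0"
    by simp
  have K: "insert j G \<in> koszul_cx S b" and card: "card (insert j G) = Suc q"
    using assms nz unfolding chains_def by auto
  have "insert j G \<subseteq> {0, 1, 2}"
    using K unfolding koszul_cx_def by blast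
  then have "finite G"
    by (meson finite.emptyI finite.insertI finite_subset subset_insertI)
  then show "G \<in> koszul_cx S b \<and> card G = q"
    using koszul_cx_subset[OF K, of G] card j by auto
qed

lemma bd_bd:
  assumes "e \<in> chains S b 2"
  shows "bd (bd e) = 0"
proof
  fix G
  have bde: "bd e \<in> chains S b 1"
    using bd_chains[of e S b 1] assms by (simp add: numeral_2_eq_2)
  show "bd (bd e) G = 0 G"
  proof (cases "G = {}")
    case True
    then show ?thesis
      by (simp add: bd_empty bd_vertex0 bd_vertex1[simplified] bd_vertex2)
  next
    case False
    have "bd e (insert j G) = 0" if "j \<notin> G" for j
    proof -
      have "card (insert j G) \<noteq> 1"
        using that False by (auto simp: card_1_singleton_iff)
      then show ?thesis
        using bde unfolding chains_def by auto
    qed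
    then show ?thesis
      by (simp add: bd_def)
  qed
qed

lemma one_chains_finite_span:
  "chains S b 1 \<subseteq> chain_space.span ((\<lambda>t F. if F = {t} then 1 else 0 :: 'k::field) ` {0, 1, 2})"
proof
  fix c :: "nat set \<Rightarrow> 'k"
  assume c: "c \<in> chains S b 1"
  define \<delta> where "\<delta> t = (\<lambda>F. if F = {t} then 1 else 0 :: 'k)" for t :: nat
  have "c = kscale (c {0}) (\<delta> 0) + kscale (c {1}) (\<delta> 1) + kscale (c {2}) (\<delta> 2)"
  proof
    fix F
    show "c F = (kscale (c {0}) (\<delta> 0) + kscale (c {1}) (\<delta> 1) + kscale (c {2}) (\<delta> 2)) F"
    proof (cases "c F = 0")
      case True
      then show ?thesis by (auto simp: kscale_def \<delta>_def)
    next
      case False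
      then have "F \<in> koszul_cx S b" "card F = 1"
        using c unfolding chains_def by auto
      then obtain t where "F = {t}" "t \<in> {0, 1, 2}"
        by (auto simp: card_1_singleton_iff koszul_cx_def)
      then show ?thesis by (auto simp: kscale_def \<delta>_def)
    qed
  qed
  also have "\<dots> \<in> chain_space.span (\<delta> ` {0, 1, 2})"
    by (intro chain_space.span_add chain_space.span_scale chain_space.span_base) auto
  finally show "c \<in> chain_space.span (\<delta> ` {0, 1, 2})" .
qed

lemma one_cycles_subset_span_boundaries:
  assumes "betti TYPE('k::field) S 1 b = 0"
  shows "{c \<in> chains S b 1. bd c = 0} \<subseteq> chain_space.span (bd ` (chains S b 2 :: (nat set \<Rightarrow> 'k) set))"
  \<comment> \<open>\<open>betti\<close> is a truncated difference, so its vanishing only bounds the dimension of the cycles.\<close>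
proof (rule chain_space.subset_span_if_dim_le)
  show "bd ` chains S b 2 \<subseteq> {c \<in> chains S b 1. bd c = 0}"
    using bd_chains[of _ S b 1] bd_bd[of _ S b] by (auto simp: numeral_2_eq_2)
  show "{c \<in> chains S b 1. bd c = 0} \<subseteq> chain_space.span ((\<lambda>t F. if F = {t} then 1 else 0 :: 'k) ` {0, 1, 2})"
    using one_chains_finite_span by blast
  show "chain_space.dim {c \<in> (chains S b 1 :: (nat set \<Rightarrow> 'k) set). bd c = 0}
      \<le> chain_space.dim (bd ` (chains S b 2 :: (nat set \<Rightarrow> 'k) set))"
    using assms unfolding betti_def by (simp add: numeral_2_eq_2)
qed simp

lemma vertex_difference_cycle:
  assumes i: "{i} \<in> koszul_cx S b" and k: "{k} \<in> koszul_cx S b" and "i \<noteq> k"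
  defines "c \<equiv> \<lambda>F. if F = {i} then 1 else if F = {k} then - 1 else (0 :: 'k::field)"
  shows "c \<in> chains S b 1" "bd c = 0"
proof -
  show "c \<in> chains S b 1"
    unfolding chains_def c_def using i k by auto
  have "i \<in> {0, 1, 2}" "k \<in> {0, 1, 2}"
    using i k by (auto simp: koszul_cx_def)
  show "bd c = 0"
  proof
    fix G
    show "bd c G = 0 G"
    proof (cases "G = {}")
      case True
      then show ?thesis
        using \<open>i \<noteq> k\<close> \<open>i \<in> {0, 1, 2}\<close> \<open>k \<in> {0, 1, 2}\<close> by (auto simp: bd_empty c_def)
    next
      case False
      then have "c (insert j G) = 0" if "j \<notin> G" for j
        using that unfolding c_def by auto
      then show ?thesis
        by (simp add: bd_def)
    qed
  qed
qed

lemma koszul_cx_connected: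
  assumes betti: "betti TYPE('k::field) S 1 b = 0"
    and i: "{i} \<in> koszul_cx S b" and k: "{k} \<in> koszul_cx S b"
  shows "{i, k} \<in> koszul_cx S b \<or> (\<exists>m. {i, m} \<in> koszul_cx S b \<and> {m, k} \<in> koszul_cx S b)"
proof (rule ccontr)
  let ?K = "koszul_cx S b"
  assume unlinked: "\<not> ?thesis"
  then have "i \<noteq> k"
    using i by auto
  have "i \<in> {0, 1, 2}" "k \<in> {0, 1, 2}"
    using i k by (auto simp: koszul_cx_def)
  then obtain m where m: "m \<in> {0, 1, 2}" "m \<noteq> i" "m \<noteq> k"
    using \<open>i \<noteq> k\<close> by (metis insertCI numeral_2_eq_2 One_nat_def n_not_Suc_n zero_neq_numeral)
  define cyc :: "nat set \<Rightarrow> 'k" where "cyc F = (if F = {i} then 1 else if F = {k} then - 1 else 0)" for F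
  have cycle: "cyc \<in> chains S b 1" "bd cyc = 0"
    using vertex_difference_cycle[OF i k \<open>i \<noteq> k\<close>] unfolding cyc_def by blast+
  \<comment> \<open>\<open>\<phi>\<close> sums the coefficients over the component of \<open>i\<close> in the 1-skeleton of \<open>?K\<close>, which misses \<open>k\<close>.\<close>
  define \<phi> where "\<phi> c = c {i} + (if {i, m} \<in> ?K then c {m} else 0)" for c :: "nat set \<Rightarrow> 'k"
  have "\<phi> (bd e) = 0" if "e \<in> chains S b 2" for e
  proof -
    have outside: "e F = 0" if "F \<notin> ?K" for F
      using \<open>e \<in> chains S b 2\<close> that unfolding chains_def by auto
    then have "e {i, k} = 0" "e {k, i} = 0"
      using unlinked by (auto simp: insert_commute)
    moreover have "{i, m} \<in> ?K \<Longrightarrow> e {m, k} = 0 \<and> e {k, m} = 0"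
      using outside unlinked by (auto simp: insert_commute)
    moreover have "{i, m} \<notin> ?K \<Longrightarrow> e {m, i} = 0 \<and> e {i, m} = 0"
      using outside by (auto simp: insert_commute)
    ultimately show ?thesis
      using \<open>i \<in> {0, 1, 2}\<close> \<open>k \<in> {0, 1, 2}\<close> m \<open>i \<noteq> k\<close> unfolding \<phi>_def
      by (auto simp: bd_vertex0 bd_vertex1[simplified] bd_vertex2 insert_commute)
  qed
  moreover have "chain_space.subspace {c. \<phi> c = 0}"
    unfolding chain_space.subspace_def \<phi>_def kscale_def
    by (auto simp: algebra_simps simp flip: distrib_left)
  ultimately have "chain_space.span (bd ` chains S b 2) \<subseteq> {c. \<phi> c = 0}"
    by (intro chain_space.span_minimal) auto
  then have "\<phi> cyc = 0"
    using one_cycles_subset_span_boundaries[OF betti] cycle by blast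
  moreover have "cyc {m} = 0" "cyc {i} = 1"
    using m unfolding cyc_def by auto
  ultimately show False
    unfolding \<phi>_def by (simp split: if_splits)
qed

section \<open>Connectivity of the dual graph\<close>

definition dual_graph :: "mono set \<Rightarrow> (mono \<times> mono) set" where
  "dual_graph W = {(p, q). p \<in> W \<and> q \<in> W \<and> dual_edge p q}"

lemma dual_graph_rtrancl_mono:
  "W \<subseteq> W' \<Longrightarrow> (f, g) \<in> (dual_graph W)\<^sup>* \<Longrightarrow> (f, g) \<in> (dual_graph W')\<^sup>*"
  unfolding dual_graph_def by (erule rtrancl_mono[THEN subsetD, rotated]) auto

lemma dual_edge_if_mdeg_mlcm:
  assumes "mdeg f = d" "mdeg g = d" "f \<noteq> g" "mdeg (mlcm f g) \<le> d + 1"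
  shows "dual_edge f g"
proof -
  have "mlcm f g \<noteq> f"
    using assms mdvd_mdeg_eq_imp_eq[OF mdvd_mlcm2[of g f]] by metis
  then have "mdeg f < mdeg (mlcm f g)"
    using mdvd_mdeg_le[OF mdvd_mlcm1] mdvd_mdeg_eq_imp_eq[OF mdvd_mlcm1] by (metis le_neq_implies_less)
  then show ?thesis
    using assms unfolding dual_edge_def by simp
qed

definition divisors_connected :: "mono set \<Rightarrow> mono \<Rightarrow> bool" where
  "divisors_connected S b \<longleftrightarrow>
     (\<forall>f\<in>S. \<forall>g\<in>S. mdvd f b \<longrightarrow> mdvd g b \<longrightarrow> (f, g) \<in> (dual_graph {h \<in> S. mdvd h b})\<^sup>*)"

lemma koszul_cx_edge_linked:
  assumes below: "\<forall>t. {t} \<in> koszul_cx S b \<longrightarrow> divisors_connected S (face_shift b {t})"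
    and st: "{s, t} \<in> koszul_cx S b" and h: "h \<in> S" "mdvd h (face_shift b {s})"
    and h': "h' \<in> S" "mdvd h' (face_shift b {t})"
  shows "(h, h') \<in> (dual_graph {h \<in> S. mdvd h b})\<^sup>*"
proof -
  have lift: "(p, q) \<in> (dual_graph {h \<in> S. mdvd h b})\<^sup>*"
    if "{r} \<in> koszul_cx S b" "p \<in> S" "q \<in> S"
      "mdvd p (face_shift b {r})" "mdvd q (face_shift b {r})" for r p q
  proof (rule dual_graph_rtrancl_mono)
    show "(p, q) \<in> (dual_graph {h \<in> S. mdvd h (face_shift b {r})})\<^sup>*"
      using below that unfolding divisors_connected_def by blast
    have "mdvd (face_shift b {r}) b"
      using mdvd_face_shift_antimono[of "{}" "{r}" b] by simp
    then show "{h \<in> S. mdvd h (face_shift b {r})} \<subseteq> {h \<in> S. mdvd h b}"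
      using mdvd_trans by blast
  qed
  obtain h0 where h0: "h0 \<in> S" "mdvd h0 (face_shift b {s})" "mdvd h0 (face_shift b {t})"
    using koszul_cx_common_divisor[OF st] .
  have "{s} \<in> koszul_cx S b" "{t} \<in> koszul_cx S b"
    using koszul_cx_subset[OF st] by auto
  then have "(h, h0) \<in> (dual_graph {h \<in> S. mdvd h b})\<^sup>*" "(h0, h') \<in> (dual_graph {h \<in> S. mdvd h b})\<^sup>*"
    using lift h h' h0 by blast+
  then show ?thesis
    by (rule rtrancl_trans)
qed

lemma linear_resolution_divisors_connected_step:
  assumes lr: "linear_resolution TYPE('k::field) d S" and deg: "\<forall>m\<in>S. mdeg m = d"
    and below: "\<forall>t. {t} \<in> koszul_cx S b \<longrightarrow> divisors_connected S (face_shift b {t})"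
  shows "divisors_connected S b"
  unfolding divisors_connected_def
proof (intro ballI impI)
  fix f g assume fg: "f \<in> S" "g \<in> S" "mdvd f b" "mdvd g b"
  show "(f, g) \<in> (dual_graph {h \<in> S. mdvd h b})\<^sup>*"
  proof (cases "f = g")
    case True
    then show ?thesis by simp
  next
    case False
    have deg_fg: "mdeg f = d" "mdeg g = d"
      using deg fg by auto
    then have "f \<noteq> b" "g \<noteq> b"
      using False fg mdvd_mdeg_eq_imp_eq by metis+
    show ?thesis
    proof (cases "mdeg b = d + 1")
      case True
      then have "dual_edge f g"
        using dual_edge_if_mdeg_mlcm[OF deg_fg False] mdvd_mdeg_le[OF mlcm_least] fg by metis
      then show ?thesis
        using fg unfolding dual_graph_def by auto
    next
      case False
      then have betti: "betti TYPE('k) S 1 b = 0"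
        using lr unfolding linear_resolution_def by fastforce
      obtain i where i: "{i} \<in> koszul_cx S b" "mdvd f (face_shift b {i})"
        using koszul_cx_vertex_above[OF _ _ \<open>f \<noteq> b\<close>] fg by metis
      obtain k where k: "{k} \<in> koszul_cx S b" "mdvd g (face_shift b {k})"
        using koszul_cx_vertex_above[OF _ _ \<open>g \<noteq> b\<close>] fg by metis
      from koszul_cx_connected[OF betti i(1) k(1)] show ?thesis
      proof (elim disjE exE conjE)
        assume "{i, k} \<in> koszul_cx S b"
        then show ?thesis
          using koszul_cx_edge_linked[OF below] fg i k by blast
      next
        fix m assume im: "{i, m} \<in> koszul_cx S b" and mk: "{m, k} \<in> koszul_cx S b"
        obtain h where "h \<in> S" "mdvd h (face_shift b {m})"
          using koszul_cx_common_divisor[OF im] .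
        then have "(f, h) \<in> (dual_graph {h \<in> S. mdvd h b})\<^sup>*" "(h, g) \<in> (dual_graph {h \<in> S. mdvd h b})\<^sup>*"
          using koszul_cx_edge_linked[OF below im] koszul_cx_edge_linked[OF below mk] fg i k by blast+
        then show ?thesis
          by (rule rtrancl_trans)
      qed
    qed
  qed
qed

lemma linear_resolution_divisors_connected:
  assumes "linear_resolution TYPE('k::field) d S" "\<forall>m\<in>S. mdeg m = d"
  shows "divisors_connected S b"
proof (induction b rule: measure_induct_rule[where f = mdeg])
  case (less b)
  then show ?case
    using linear_resolution_divisors_connected_step[OF assms] mdeg_face_shift_vertex by blast
qed

lemma linear_resolution_GJ_connected:
  assumes "linear_resolution TYPE('k::field) d S" "\<forall>m\<in>S. mdeg m = d"
  shows "GJ_connected S f g"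
proof -
  have "GJ_verts S f g = {h \<in> S. mdvd h (mlcm f g)}"
    using mingens_equal_degree[OF assms(2)] unfolding GJ_verts_def by simp
  then show ?thesis
    using linear_resolution_divisors_connected[OF assms, of "mlcm f g"]
    unfolding GJ_connected_def divisors_connected_def dual_graph_def Let_def by simp
qed

section \<open>The tree ordering\<close>

lemma mdvd_mlcm_same_level_between:
  assumes deg: "mdeg h = mdeg u" "mdeg v = mdeg u" and level: "zd h = zd u" "zd v = zd u"
    and "mdvd h (mlcm u v)" "h \<noteq> u" "h \<noteq> v"
  obtains a b where "a \<in> {u, v}" "b \<in> {u, v}" "xd a < xd h" "xd h < xd b"
proof -
  have neq: "xd h \<noteq> xd w" if "w \<in> {u, v}" for w
  proof
    assume "xd h = xd w"
    moreover from this have "yd h = yd w"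
      using that deg level unfolding mdeg_def by auto
    ultimately have "h = w"
      using that level by (intro mono_eqI) auto
    then show False
      using that \<open>h \<noteq> u\<close> \<open>h \<noteq> v\<close> by auto
  qed
  have "xd h \<le> xd u \<or> xd h \<le> xd v" "yd h \<le> yd u \<or> yd h \<le> yd v"
    using \<open>mdvd h (mlcm u v)\<close> unfolding mdvd_def mlcm_def by auto
  moreover have "xd u + yd u = xd h + yd h" "xd v + yd v = xd h + yd h"
    using deg level unfolding mdeg_def by linarith+
  ultimately have "(xd u < xd h \<or> xd v < xd h) \<and> (xd h < xd u \<or> xd h < xd v)"
    using neq[of u] neq[of v] by auto
  then show ?thesis
    using that by blast
qed

text \<open>\<open>tree_rank (deg\<^sub>x m\<^sub>1)\<close> is the order in which the tree ordering lists a level above the lowest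
  one, \<open>m\<^sub>1\<close> being its first element; on the lowest level any \<open>x\<^sub>1\<close> bounding all \<open>x\<close>-degrees works.\<close>

definition tree_rank :: "nat \<Rightarrow> mono \<Rightarrow> nat" where
  "tree_rank x1 m = (if xd m \<le> x1 then x1 - xd m else x1 + xd m)"

lemma tree_rank_between:
  "xd a < xd h \<Longrightarrow> xd h < xd b \<Longrightarrow> tree_rank x1 h < tree_rank x1 a \<or> tree_rank x1 h < tree_rank x1 b"
  unfolding tree_rank_def by auto

lemma sorted_tree_rank_decreasing:
  assumes "\<forall>m\<in>set L. xd m \<le> x1" "sorted_wrt (\<lambda>a b. xd a > xd b) L"
  shows "sorted_wrt (\<lambda>a b. tree_rank x1 a < tree_rank x1 b) L"
  using assms(1) by (intro sorted_wrt_mono_rel[OF _ assms(2)]) (auto simp: tree_rank_def)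

lemma sorted_tree_rank_increasing:
  assumes "\<forall>m\<in>set L. x1 < xd m" "sorted_wrt (\<lambda>a b. xd a < xd b) L"
  shows "sorted_wrt (\<lambda>a b. tree_rank x1 a < tree_rank x1 b) L"
  using assms(1) by (intro sorted_wrt_mono_rel[OF _ assms(2)]) (auto simp: tree_rank_def)

lemma sorted_tree_rank_vshape:
  assumes L1: "\<forall>m\<in>set L1. xd m < xd m1" "sorted_wrt (\<lambda>a b. xd a > xd b) L1"
    and L2: "\<forall>m\<in>set L2. xd m1 < xd m" "sorted_wrt (\<lambda>a b. xd a < xd b) L2"
  shows "sorted_wrt (\<lambda>a b. tree_rank (xd m1) a < tree_rank (xd m1) b) (m1 # L1 @ L2)"
proof -
  have "sorted_wrt (\<lambda>a b. tree_rank (xd m1) a < tree_rank (xd m1) b) L1"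
    using L1 by (intro sorted_tree_rank_decreasing) auto
  moreover have "sorted_wrt (\<lambda>a b. tree_rank (xd m1) a < tree_rank (xd m1) b) L2"
    using L2 by (rule sorted_tree_rank_increasing)
  moreover have "0 < tree_rank (xd m1) a \<and> tree_rank (xd m1) a \<le> xd m1" if "a \<in> set L1" for a
    using L1(1) that unfolding tree_rank_def by auto
  moreover have "xd m1 < tree_rank (xd m1) a" if "a \<in> set L2" for a
    using L2(1) that unfolding tree_rank_def by auto
  ultimately show ?thesis
    by (fastforce simp: sorted_wrt_append tree_rank_def)
qed

lemma tree_ordering_level_sorted:
  assumes "tree_ordering ms"
  obtains x1 where "sorted_wrt (\<lambda>a b. tree_rank x1 a < tree_rank x1 b) (filter (\<lambda>m. zd m = l) ms)"
proof -
  define c where "c = Min (zd ` set ms)"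
  have G: "mingens (set ms) = set ms"
    using assms by (simp add: tree_ordering_def Let_def)
  note T = assms[unfolded tree_ordering_def Let_def G, folded c_def]
  consider "\<forall>g\<in>set ms. zd g \<noteq> l" | "l = c" | "c < l" "\<exists>g\<in>set ms. zd g = l"
    unfolding c_def by (metis List.finite_set Min_le finite_imageI image_eqI le_neq_implies_less)
  then show ?thesis
  proof cases
    case 1
    then have "filter (\<lambda>m. zd m = l) ms = []"
      by (simp add: filter_empty_conv)
    then show ?thesis
      using that by simp
  next
    case 2
    have "sorted_wrt (\<lambda>a b. xd a > xd b) (filter (\<lambda>m. zd m = l) ms)"
      using T 2 by blast
    moreover have "\<forall>m\<in>set (filter (\<lambda>m. zd m = l) ms). xd m \<le> Max (xd ` set ms)"
      by simp
    ultimately show ?thesis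
      using that sorted_tree_rank_decreasing by blast
  next
    case 3
    then obtain m1 L1 L2 where
      "filter (\<lambda>m. zd m = l) ms = m1 # L1 @ L2"
      "set L1 = {m \<in> set ms. zd m = l \<and> xd m < xd m1}" "sorted_wrt (\<lambda>a b. xd a > xd b) L1"
      "set L2 = {m \<in> set ms. zd m = l \<and> xd m > xd m1}" "sorted_wrt (\<lambda>a b. xd a < xd b) L2"
      using T by blast
    then show ?thesis
      using that sorted_tree_rank_vshape[of L1 m1 L2] by auto
  qed
qed

lemma tree_ordering_prefix_same_level_divisor:
  assumes tree: "tree_ordering ms" and deg: "\<forall>m\<in>set ms. mdeg m = d"
    and u: "u \<in> set (take j ms)" and v: "v \<in> set (take j ms)" and level: "zd u = zd v"
    and h: "h \<in> set ms" "mdvd h (mlcm u v)"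
  shows "h \<in> set (take j ms)"
proof (rule ccontr)
  assume "h \<notin> set (take j ms)"
  then have late: "h \<in> set (drop j ms)"
    using h(1) by (metis Un_iff append_take_drop_id set_append)
  have "sorted_wrt (\<lambda>a b. zd a \<le> zd b) ms"
    using tree by (simp add: tree_ordering_def Let_def)
  then have "zd u \<le> zd h"
    using u late by (metis append_take_drop_id sorted_wrt_append)
  moreover have "zd h \<le> zd u"
    using h(2) level unfolding mdvd_def mlcm_def by simp
  ultimately have "zd h = zd u" by simp
  moreover have "mdeg h = mdeg u" "mdeg v = mdeg u"
    using deg h(1) u v by (metis in_set_takeD)+
  moreover have "h \<noteq> u" "h \<noteq> v"
    using u v \<open>h \<notin> set (take j ms)\<close> by auto
  ultimately obtain a b where ab: "a \<in> {u, v}" "b \<in> {u, v}" "xd a < xd h" "xd h < xd b"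
    using mdvd_mlcm_same_level_between level h(2) by metis
  let ?P = "\<lambda>m. zd m = zd u"
  obtain x1 where "sorted_wrt (\<lambda>a b. tree_rank x1 a < tree_rank x1 b) (filter ?P ms)"
    using tree_ordering_level_sorted[OF tree] .
  then have "sorted_wrt (\<lambda>a b. tree_rank x1 a < tree_rank x1 b)
      (filter ?P (take j ms) @ filter ?P (drop j ms))"
    unfolding filter_append[symmetric] append_take_drop_id .
  moreover have "a \<in> set (filter ?P (take j ms))" "b \<in> set (filter ?P (take j ms))"
    "h \<in> set (filter ?P (drop j ms))"
    using ab(1,2) u v level late \<open>zd h = zd u\<close> by auto
  ultimately have "tree_rank x1 a < tree_rank x1 h" "tree_rank x1 b < tree_rank x1 h"
    unfolding sorted_wrt_append by blast+
  then show False
    using tree_rank_between[OF ab(3,4), of x1] by linarith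
qed

theorem mainTheorem5:
  fixes ms :: "mono list" and d j :: nat and u v :: mono
  assumes "distinct ms"
    and "\<forall>m\<in>set ms. mdeg m = d"
    and "linear_resolution TYPE('k::field) d (set ms)"
    and "tree_ordering ms"
    and "2 \<le> j" and "j \<le> length ms"
    and "u \<in> mingens (set (take j ms))" and "v \<in> mingens (set (take j ms))"
    and "zd u = zd v"
  shows "GJ_connected (set (take j ms)) u v"
proof -
  have deg_prefix: "\<forall>m\<in>set (take j ms). mdeg m = d"
    using assms(2) by (auto dest: in_set_takeD)
  have uv: "u \<in> set (take j ms)" "v \<in> set (take j ms)"
    using assms(7,8) unfolding mingens_def by auto
  have "GJ_verts (set (take j ms)) u v = GJ_verts (set ms) u v"
    unfolding GJ_verts_def mingens_equal_degree[OF deg_prefix] mingens_equal_degree[OF assms(2)]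
    using tree_ordering_prefix_same_level_divisor[OF assms(4,2) uv assms(9)]
    by (auto dest: in_set_takeD)
  moreover have "GJ_connected (set ms) u v"
    using linear_resolution_GJ_connected[OF assms(3,2)] .
  ultimately show ?thesis
    unfolding GJ_connected_def by simp
qed

end
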